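(* Let $p\in P(k,l)\setminus N(k,l)$ be a pairing with $s=(k+l)/2\ge 4$ strings. (1) If $p\notin E(k,l)$, then some capping $p'$ of $p$ satisfies $p'\notin E$ (i.e. $p'$ is a pairing not in $E$ of the corresponding size). (2) If $p\in E(k,l)\setminus N(k,l)$, then some capping $p'$ of $p$ satisfies $p'\in E\setminus N$.
   Context: $P(k,l)$ is the set of pairings (partitions into 2-element blocks, called strings) of $k$ upper and $l$ lower points; the $k+l$ points are numbered $1,\dots,k+l$ counterclockwise starting from the bottom left, and considered cyclically (as points on the boundary of a disk). Two strings $\{a,b\},\{c,d\}$ cross iff exactly one of $c,d$ lies strictly between $a$ and $b$. $E(k,l)\subset P(k,l)$ consists of the pairings in which each string crosses an even number of other strings; $N(k,l)\subset E(k,l)$ consists of the noncrossing pairings (no two strings cross). For $i=1,\dots,k+l$ (indices mod $k+l$), the capping $p^i$ is the pairing of the remaining $k+l-2$ points obtained by joining the $i$-th and $(i+1)$-th points by a semicircle and deleting these two points, so that the strings through them are concatenated into one string (a closed loop, if it arises, is discarded), the remaining points keeping their cyclic order. A capping of $p$ is any $p^i$. *)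

theory Defs
  imports Main
begin

text \<open>Points are numbered 1..n, n = k+l. A pairing is a set of 2-element blocks (strings)
partitioning {1..n}. All notions below (crossing, E, N, capping) depend on k and l only
through n = k+l.\<close>

definition is_pairing :: "nat \<Rightarrow> nat set set \<Rightarrow> bool" where
  "is_pairing n p \<longleftrightarrow> (\<forall>s\<in>p. card s = 2 \<and> s \<subseteq> {1..n}) \<and> (\<forall>x\<in>{1..n}. \<exists>!s. s \<in> p \<and> x \<in> s)"

definition strictly_between :: "nat \<Rightarrow> nat \<Rightarrow> nat \<Rightarrow> bool" where
  "strictly_between a b x \<longleftrightarrow> min a b < x \<and> x < max a b"

definition crosses :: "nat set \<Rightarrow> nat set \<Rightarrow> bool" where
  "crosses s t \<longleftrightarrow> (\<exists>a b c d. s = {a, b} \<and> t = {c, d} \<and>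
      (strictly_between a b c \<noteq> strictly_between a b d))"

definition Pn :: "nat \<Rightarrow> nat set set set" where
  "Pn n = {p. is_pairing n p}"

definition En :: "nat \<Rightarrow> nat set set set" where
  "En n = {p \<in> Pn n. \<forall>s\<in>p. even (card {t \<in> p. t \<noteq> s \<and> crosses s t})}"

definition Nn :: "nat \<Rightarrow> nat set set set" where
  "Nn n = {p \<in> Pn n. \<forall>s\<in>p. \<forall>t\<in>p. \<not> crosses s t}"

definition P :: "nat \<Rightarrow> nat \<Rightarrow> nat set set set" where
  "P k l = Pn (k + l)"

definition E :: "nat \<Rightarrow> nat \<Rightarrow> nat set set set" where
  "E k l = En (k + l)"

definition N :: "nat \<Rightarrow> nat \<Rightarrow> nat set set set" where
  "N k l = Nn (k + l)"

definition csucc :: "nat \<Rightarrow> nat \<Rightarrow> nat" where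
  "csucc n i = (if i = n then 1 else i + 1)"

definition partner :: "nat set set \<Rightarrow> nat \<Rightarrow> nat" where
  "partner p x = (THE y. {x, y} \<in> p)"

text \<open>capping p^i of a pairing p on n points: join points i and i+1 (mod n), concatenate the
strings through them (discarding a closed loop), delete the two points and renumber the
remaining points 1..n-2 in order (cyclic order is preserved).\<close>
definition capping :: "nat \<Rightarrow> nat set set \<Rightarrow> nat \<Rightarrow> nat set set" where
  "capping n p i =
     (let j = csucc n i; a = partner p i; b = partner p j;
          q = (p - {{i, a}, {j, b}}) \<union> (if a = j then {} else {{a, b}});
          r = (\<lambda>x. card {y \<in> {1..n} - {i, j}. y \<le> x})
      in (\<lambda>s. r ` s) ` q)"

end

theory Submission
  imports Defs
begin

(* Capping a pairing p of n points at a position i joins the strings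
   through i and its cyclic successor i' and relabels the remaining points
   order-preservingly.  Because i and i' are adjacent, a string {c,d} avoiding both
   separates them or not simultaneously; hence
   (a) a string of p avoiding i and i' survives, and the parity of its crossing number
       is unchanged;
   (b) the concatenated string crosses exactly those strings crossing one, but not
       both, of the two strings it replaces, so its crossing number has the parity of
       the sum of theirs.
   Consequently capping maps E into E, keeps an odd string odd, and keeps any crossing
   between two strings avoiding i and i'.
   The theorem then reduces to finding a free adjacent pair i, i': if no such pair
   avoids a set S of points then n <= 2 |S|.  For part (1) S is an odd string; for
   part (2) S is the union of a crossing string s with one of two strings crossing s
   (s has an even, nonzero crossing number), and four points block every adjacent pair
   only if n = 8 and they are all the odd or all the even points, which cannot happen
   for both choices. *)

section \<open>Crossing of strings\<close>

abbreviation btw :: "nat \<Rightarrow> nat \<Rightarrow> nat \<Rightarrow> bool" where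
  "btw \<equiv> strictly_between"

lemma btw_sym: "btw a b x = btw b a x"
  by (auto simp: strictly_between_def)

lemma crosses_iff: "crosses {a, b} {c, d} \<longleftrightarrow> btw a b c \<noteq> btw a b d"
  unfolding crosses_def by (auto simp: doubleton_eq_iff btw_sym)

lemma crosses_sym_distinct:
  "distinct [a, b, c, d] \<Longrightarrow> (btw a b c \<noteq> btw a b d) = (btw c d a \<noteq> btw c d b)"
  by (auto simp: strictly_between_def min_def max_def)

lemma not_crosses_self: "\<not> crosses {x, y} {x, y}"
  by (simp add: crosses_iff strictly_between_def)

lemma btw_adjacent:
  assumes "i \<in> {1..n}" "c \<in> {1..n}" "d \<in> {1..n}" "c \<notin> {i, csucc n i}" "d \<notin> {i, csucc n i}"
  shows "btw c d i = btw c d (csucc n i)"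
  using assms by (auto simp: strictly_between_def min_def max_def csucc_def)

lemma crosses_relabel:
  assumes mono: "\<And>x y. x \<in> D \<Longrightarrow> y \<in> D \<Longrightarrow> f x < f y \<longleftrightarrow> x < y"
    and "{a, b, c, d} \<subseteq> D"
  shows "crosses {f a, f b} {f c, f d} = crosses {a, b} {c, d}"
proof -
  have le: "f x \<le> f y \<longleftrightarrow> x \<le> y" if "x \<in> D" "y \<in> D" for x y
    using mono[OF that(2,1)] by linarith
  have "btw (f a) (f b) (f z) = btw a b z" if "z \<in> D" for z
    using assms(2) that unfolding strictly_between_def min_def max_def
    by (auto simp: le mono)
  then show ?thesis using assms(2) by (simp add: crosses_iff)
qed

section \<open>Pairings on an arbitrary carrier\<close>

text \<open>A pairing of a carrier set D: a partition of D into 2-element strings.  Cappings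
  produce pairings of a set with two points removed, so we need arbitrary carriers.\<close>
definition pairing_on :: "nat set \<Rightarrow> nat set set \<Rightarrow> bool" where
  "pairing_on D p \<longleftrightarrow> (\<forall>s\<in>p. card s = 2 \<and> s \<subseteq> D) \<and> (\<forall>x\<in>D. \<exists>!s. s \<in> p \<and> x \<in> s)"

lemma is_pairing_iff: "is_pairing n p = pairing_on {1..n} p"
  by (simp add: is_pairing_def pairing_on_def)

lemma pairing_card: "pairing_on D p \<Longrightarrow> s \<in> p \<Longrightarrow> card s = 2"
  by (simp add: pairing_on_def)

lemma pairing_sub: "pairing_on D p \<Longrightarrow> s \<in> p \<Longrightarrow> s \<subseteq> D"
  by (simp add: pairing_on_def)

lemma pairing_unique: "pairing_on D p \<Longrightarrow> s \<in> p \<Longrightarrow> t \<in> p \<Longrightarrow> x \<in> s \<Longrightarrow> x \<in> t \<Longrightarrow> s = t"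
  unfolding pairing_on_def by blast

lemma pairing_string: "pairing_on D p \<Longrightarrow> s \<in> p \<Longrightarrow> \<exists>x y. s = {x, y} \<and> x \<noteq> y"
  by (metis pairing_card card_2_iff)

lemma pairing_covers: "pairing_on D p \<Longrightarrow> x \<in> D \<Longrightarrow> \<exists>s\<in>p. x \<in> s"
  unfolding pairing_on_def by blast

lemma pairing_finite: "finite D \<Longrightarrow> pairing_on D p \<Longrightarrow> finite p"
  by (metis PowI finite_Pow_iff pairing_sub rev_finite_subset subsetI)

lemma pairing_disjoint: "pairing_on D p \<Longrightarrow> s \<in> p \<Longrightarrow> t \<in> p \<Longrightarrow> s \<noteq> t \<Longrightarrow> s \<inter> t = {}"
  using pairing_unique by blast

lemma partner_eq:
  assumes "pairing_on D p" "{x, y} \<in> p"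
  shows "partner p x = y"
proof -
  have "z = y" if z: "{x, z} \<in> p" for z
  proof -
    have "{x, z} = {x, y}" using pairing_unique[OF assms(1) z assms(2), of x] by simp
    moreover have "z \<noteq> x" using pairing_card[OF assms(1) z] by (cases "x = z") auto
    ultimately show "z = y" by (auto simp: doubleton_eq_iff)
  qed
  then show ?thesis unfolding partner_def using assms(2) by (metis the_equality)
qed

lemma partner_string:
  assumes "pairing_on D p" "x \<in> D"
  shows "{x, partner p x} \<in> p" "partner p x \<noteq> x" "partner p x \<in> D"
proof -
  obtain s where s: "s \<in> p" "x \<in> s" using pairing_covers[OF assms] by blast
  obtain y where y: "s = {x, y}" "y \<noteq> x"
    using pairing_string[OF assms(1) s(1)] s(2) by auto
  have "partner p x = y" using partner_eq[OF assms(1)] y s by simp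
  then show "{x, partner p x} \<in> p" "partner p x \<noteq> x" "partner p x \<in> D"
    using y s pairing_sub[OF assms(1) s(1)] by auto
qed

lemma pairing_image:
  assumes "pairing_on D q" "bij_betw f D D'"
  shows "pairing_on D' ((\<lambda>s. f ` s) ` q)"
proof -
  have inj: "inj_on f D" and im: "f ` D = D'" using assms(2) by (auto simp: bij_betw_def)
  show ?thesis unfolding pairing_on_def
  proof (rule conjI; intro ballI)
    fix s' assume "s' \<in> (\<lambda>s. f ` s) ` q"
    then obtain s where s: "s \<in> q" "s' = f ` s" by blast
    have "s \<subseteq> D" using pairing_sub[OF assms(1) s(1)] .
    then have "card (f ` s) = card s" using inj by (metis card_image inj_on_subset)
    then show "card s' = 2 \<and> s' \<subseteq> D'"
      using s \<open>s \<subseteq> D\<close> im pairing_card[OF assms(1) s(1)] by auto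
  next
    fix x' assume "x' \<in> D'"
    then obtain x where x: "x \<in> D" "x' = f x" using im by blast
    obtain s where s: "s \<in> q" "x \<in> s" using pairing_covers[OF assms(1) x(1)] by blast
    have unique: "t' = f ` s" if t': "t' \<in> (\<lambda>s. f ` s) ` q" "x' \<in> t'" for t'
    proof -
      obtain t y where t: "t \<in> q" "t' = f ` t" "y \<in> t" "x' = f y" using t' by blast
      have "y = x" using inj x t pairing_sub[OF assms(1) t(1)] by (metis inj_onD subsetD)
      then have "t = s" using pairing_unique[OF assms(1) t(1) s(1)] t(3) s(2) by blast
      then show ?thesis using t(2) by simp
    qed
    have "f ` s \<in> (\<lambda>s. f ` s) ` q \<and> x' \<in> f ` s" using s x by auto
    then show "\<exists>!s'. s' \<in> (\<lambda>s. f ` s) ` q \<and> x' \<in> s'"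
      by (rule ex1I) (use unique in blast)
  qed
qed

definition cross_count :: "nat set set \<Rightarrow> nat set \<Rightarrow> nat" where
  "cross_count p s = card {t \<in> p. t \<noteq> s \<and> crosses s t}"

lemma En_iff: "En n = {p. pairing_on {1..n} p \<and> (\<forall>s\<in>p. even (cross_count p s))}"
  by (auto simp: En_def Pn_def is_pairing_iff cross_count_def)

lemma Nn_iff: "Nn n = {p. pairing_on {1..n} p \<and> (\<forall>s\<in>p. \<forall>t\<in>p. \<not> crosses s t)}"
  by (auto simp: Nn_def Pn_def is_pairing_iff)

text \<open>Counting the elements satisfying exactly one of two properties, used to compute
  the crossing number of a concatenated string modulo 2.\<close>
lemma card_xor:
  assumes "finite R"
  shows "card {t\<in>R. X t \<noteq> Y t} + 2 * card {t\<in>R. X t \<and> Y t} = card {t\<in>R. X t} + card {t\<in>R. Y t}"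
proof -
  have "card {t\<in>R. X t} + card {t\<in>R. Y t}
      = card ({t\<in>R. X t} \<union> {t\<in>R. Y t}) + card ({t\<in>R. X t} \<inter> {t\<in>R. Y t})"
    using assms by (intro card_Un_Int) auto
  also have "{t\<in>R. X t} \<union> {t\<in>R. Y t} = {t\<in>R. X t \<noteq> Y t} \<union> {t\<in>R. X t \<and> Y t}" by auto
  also have "card \<dots> = card {t\<in>R. X t \<noteq> Y t} + card {t\<in>R. X t \<and> Y t}"
    using assms by (intro card_Un_disjoint) auto
  also have "{t\<in>R. X t} \<inter> {t\<in>R. Y t} = {t\<in>R. X t \<and> Y t}" by auto
  finally show ?thesis by simp
qed

lemma card_singleton_filter: "card {t. t = u \<and> Z t} = (if Z u then 1 else 0)"
proof -
  have "{t. t = u \<and> Z t} = (if Z u then {u} else {})" by auto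
  then show ?thesis by simp
qed

lemma card_doubleton_filter:
  assumes "u \<noteq> v"
  shows "card {t. (t = u \<or> t = v) \<and> Z t} = (if Z u then 1 else 0) + (if Z v then 1 else 0)"
proof -
  have "{t. (t = u \<or> t = v) \<and> Z t} = (if Z u then {u} else {}) \<union> (if Z v then {v} else {})" by auto
  then show ?thesis using assms by simp
qed

section \<open>The capping construction\<close>

locale capping_setup =
  fixes n :: nat and p :: "nat set set" and i :: nat
  assumes pairing: "pairing_on {1..n} p" and n2: "n \<ge> 2" and i_range: "i \<in> {1..n}"
begin

definition "succ_i = csucc n i"
definition "mate_i = partner p i"
definition "mate_j = partner p succ_i"
definition "rest = {1..n} - {i, succ_i}"
definition "joined = (p - {{i, mate_i}, {succ_i, mate_j}}) \<union>
                      (if mate_i = succ_i then {} else {{mate_i, mate_j}})"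
definition "rank = (\<lambda>x. card {y \<in> rest. y \<le> x})"

lemma capping_eq: "capping n p i = (\<lambda>s. rank ` s) ` joined"
  unfolding capping_def Let_def succ_i_def mate_i_def mate_j_def rest_def joined_def rank_def
  by simp

lemma succ_range: "succ_i \<in> {1..n}" and i_ne_succ: "i \<noteq> succ_i"
  using i_range n2 by (auto simp: succ_i_def csucc_def)

lemma finite_p: "finite p"
  using pairing_finite[OF _ pairing] by simp

lemma string_i: "{i, mate_i} \<in> p" "mate_i \<noteq> i" "mate_i \<in> {1..n}"
  using partner_string[OF pairing i_range] by (auto simp: mate_i_def)

lemma string_j: "{succ_i, mate_j} \<in> p" "mate_j \<noteq> succ_i" "mate_j \<in> {1..n}"
  using partner_string[OF pairing succ_range] by (auto simp: mate_j_def)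

lemma through_i: "s \<in> p \<Longrightarrow> i \<in> s \<Longrightarrow> s = {i, mate_i}"
  and through_mate_i: "s \<in> p \<Longrightarrow> mate_i \<in> s \<Longrightarrow> s = {i, mate_i}"
  using pairing_unique[OF pairing _ string_i(1)] by blast+

lemma through_succ: "s \<in> p \<Longrightarrow> succ_i \<in> s \<Longrightarrow> s = {succ_i, mate_j}"
  and through_mate_j: "s \<in> p \<Longrightarrow> mate_j \<in> s \<Longrightarrow> s = {succ_i, mate_j}"
  using pairing_unique[OF pairing _ string_j(1)] by blast+

lemma closed_loop: "mate_i = succ_i \<Longrightarrow> mate_j = i"
  using through_succ[OF string_i(1)] i_ne_succ string_j(2) by (auto simp: doubleton_eq_iff)

lemma joined_closed_loop: "mate_i = succ_i \<Longrightarrow> joined = p - {{i, succ_i}}"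
  using closed_loop by (auto simp: joined_def insert_commute)

lemma distinct_ends: "mate_i \<noteq> succ_i \<Longrightarrow> distinct [i, succ_i, mate_i, mate_j]"
proof -
  assume h: "mate_i \<noteq> succ_i"
  have "mate_j \<noteq> i" using through_i[OF string_j(1)] h i_ne_succ by (auto simp: doubleton_eq_iff)
  moreover have "mate_i \<noteq> mate_j"
    using through_mate_j[OF string_i(1)] h i_ne_succ string_i(2) by (auto simp: doubleton_eq_iff)
  ultimately show ?thesis using i_ne_succ string_i(2) string_j(2) h by auto
qed

lemma new_string_not_old: "mate_i \<noteq> succ_i \<Longrightarrow> {mate_i, mate_j} \<notin> p"
  using through_mate_i distinct_ends by (fastforce simp: doubleton_eq_iff)

lemma old_string:
  assumes "s \<in> joined" "s \<noteq> {mate_i, mate_j}"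
  shows "s \<in> p" "i \<notin> s" "succ_i \<notin> s" "mate_i \<notin> s" "mate_j \<notin> s"
proof -
  show sp: "s \<in> p" using assms by (auto simp: joined_def split: if_splits)
  have "s \<noteq> {i, mate_i}" "s \<noteq> {succ_i, mate_j}"
    using assms by (auto simp: joined_def split: if_splits)
  then show "i \<notin> s" "succ_i \<notin> s" "mate_i \<notin> s" "mate_j \<notin> s"
    using through_i[OF sp] through_succ[OF sp] through_mate_i[OF sp] through_mate_j[OF sp] by auto
qed

lemma new_string: "s \<in> joined \<Longrightarrow> s = {mate_i, mate_j} \<Longrightarrow> mate_i \<noteq> succ_i"
  using closed_loop by (auto simp: joined_def insert_commute)

lemma surviving_string:
  assumes "s \<in> p" "i \<notin> s" "csucc n i \<notin> s"
  shows "s \<in> joined" "s \<noteq> {mate_i, mate_j}" "rank ` s \<in> capping n p i"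
proof -
  have "s \<noteq> {i, mate_i}" "s \<noteq> {succ_i, mate_j}" using assms by (auto simp: succ_i_def)
  then show sq: "s \<in> joined" using assms(1) by (simp add: joined_def)
  show "s \<noteq> {mate_i, mate_j}" using through_mate_i[OF assms(1)] assms(2) by auto
  show "rank ` s \<in> capping n p i" using sq unfolding capping_eq by blast
qed

lemma joined_pairing: "pairing_on rest joined"
  unfolding pairing_on_def
proof (rule conjI; intro ballI)
  fix s assume s: "s \<in> joined"
  show "card s = 2 \<and> s \<subseteq> rest"
  proof (cases "s = {mate_i, mate_j}")
    case True
    then show ?thesis using new_string[OF s] distinct_ends string_i(3) string_j(3)
      by (auto simp: rest_def)
  next
    case False
    note old = old_string[OF s False]
    show ?thesis using old pairing_card[OF pairing old(1)] pairing_sub[OF pairing old(1)]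
      by (auto simp: rest_def)
  qed
next
  fix x assume "x \<in> rest"
  then have x: "x \<in> {1..n}" "x \<noteq> i" "x \<noteq> succ_i" by (auto simp: rest_def)
  obtain s where s: "s \<in> p" "x \<in> s" using pairing_covers[OF pairing x(1)] by blast
  show "\<exists>!s. s \<in> joined \<and> x \<in> s"
  proof (cases "mate_i = succ_i")
    case True
    have "s \<noteq> {i, succ_i}" using s x by auto
    then show ?thesis unfolding joined_closed_loop[OF True]
      using s pairing_unique[OF pairing] by blast
  next
    case False
    show ?thesis
    proof (cases "x = mate_i \<or> x = mate_j")
      case True
      have "{mate_i, mate_j} \<in> joined" using False by (simp add: joined_def)
      moreover have "t = {mate_i, mate_j}" if "t \<in> joined" "x \<in> t" for t
        using old_string[OF that(1)] that True by blast
      ultimately show ?thesis using True by blast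
    next
      case False
      have "s \<noteq> {i, mate_i}" "s \<noteq> {succ_i, mate_j}" using s x False by auto
      then have "s \<in> joined" using s by (simp add: joined_def)
      moreover have "t = s" if "t \<in> joined" "x \<in> t" for t
      proof -
        have "t \<noteq> {mate_i, mate_j}" using that False by auto
        then show ?thesis using old_string[OF that(1)] pairing_unique[OF pairing _ s(1)] that s
          by blast
      qed
      ultimately show ?thesis using s by blast
    qed
  qed
qed

lemma card_rest: "card rest = n - 2"
proof -
  have "{i, succ_i} \<subseteq> {1..n}" using succ_range i_range by auto
  then show ?thesis unfolding rest_def using i_ne_succ by (simp add: card_Diff_subset)
qed

lemma rank_mono: "x \<in> rest \<Longrightarrow> y \<in> rest \<Longrightarrow> x < y \<Longrightarrow> rank x < rank y"
proof -
  assume h: "x \<in> rest" "y \<in> rest" "x < y"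
  have "{z \<in> rest. z \<le> x} \<subseteq> {z \<in> rest. z \<le> y}" using h by auto
  moreover have "y \<in> {z \<in> rest. z \<le> y}" "y \<notin> {z \<in> rest. z \<le> x}" using h by auto
  ultimately have "{z \<in> rest. z \<le> x} \<subset> {z \<in> rest. z \<le> y}" by blast
  moreover have "finite {z \<in> rest. z \<le> y}" by (simp add: rest_def)
  ultimately show ?thesis unfolding rank_def by (simp add: psubset_card_mono)
qed

lemma rank_less: "x \<in> rest \<Longrightarrow> y \<in> rest \<Longrightarrow> rank x < rank y \<longleftrightarrow> x < y"
  using rank_mono[of x y] rank_mono[of y x] by (cases x y rule: linorder_cases) auto

lemma rank_inj: "inj_on rank rest"
proof (rule inj_onI)
  fix x y assume "x \<in> rest" "y \<in> rest" "rank x = rank y"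
  then show "x = y" using rank_less[of x y] rank_less[of y x] by (cases x y rule: linorder_cases) auto
qed

lemma rank_bij: "bij_betw rank rest {1..n-2}"
proof -
  have fin: "finite rest" by (simp add: rest_def)
  have "rank x \<in> {1..n-2}" if x: "x \<in> rest" for x
  proof -
    have "{y \<in> rest. y \<le> x} \<subseteq> rest" by auto
    then have "rank x \<le> n - 2" unfolding rank_def using card_rest card_mono[OF fin] by metis
    moreover have "card {y \<in> rest. y \<le> x} > 0" using x fin by (auto simp: card_gt_0_iff)
    ultimately show ?thesis unfolding rank_def by simp
  qed
  moreover have "card (rank ` rest) = n - 2" using card_image[OF rank_inj] card_rest by simp
  ultimately have "rank ` rest = {1..n-2}" by (simp add: card_subset_eq image_subsetI)
  then show ?thesis using rank_inj by (simp add: bij_betw_def)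
qed

lemma capping_pairing: "pairing_on {1..n-2} (capping n p i)"
  unfolding capping_eq by (rule pairing_image[OF joined_pairing rank_bij])

lemma crosses_rank:
  assumes "s \<in> joined" "t \<in> joined"
  shows "crosses (rank ` s) (rank ` t) = crosses s t"
proof -
  obtain x y where s: "s = {x, y}" using pairing_string[OF joined_pairing assms(1)] by blast
  obtain z w where t: "t = {z, w}" using pairing_string[OF joined_pairing assms(2)] by blast
  have "{x, y, z, w} \<subseteq> rest" using pairing_sub[OF joined_pairing] assms s t by auto
  then show ?thesis using s t crosses_relabel[OF rank_less] by simp
qed

lemma cross_count_rank:
  assumes "s \<in> joined"
  shows "cross_count (capping n p i) (rank ` s) = cross_count joined s"
proof -
  have inj: "inj_on (\<lambda>t. rank ` t) joined"
  proof (rule inj_onI)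
    fix x y assume "x \<in> joined" "y \<in> joined" "rank ` x = rank ` y"
    then show "x = y"
      using inj_on_image_eq_iff[OF rank_inj, of x y] pairing_sub[OF joined_pairing] by blast
  qed
  have "{t' \<in> capping n p i. t' \<noteq> rank ` s \<and> crosses (rank ` s) t'}
      = (\<lambda>t. rank ` t) ` {t \<in> joined. t \<noteq> s \<and> crosses s t}"
    unfolding capping_eq
  proof (intro set_eqI iffI)
    fix t' assume "t' \<in> {t' \<in> (\<lambda>s. rank ` s) ` joined. t' \<noteq> rank ` s \<and> crosses (rank ` s) t'}"
    then obtain t where t: "t \<in> joined" "t' = rank ` t" "t' \<noteq> rank ` s" "crosses (rank ` s) t'"
      by blast
    then show "t' \<in> (\<lambda>t. rank ` t) ` {t \<in> joined. t \<noteq> s \<and> crosses s t}"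
      using crosses_rank[OF assms t(1)] by auto
  next
    fix t' assume "t' \<in> (\<lambda>t. rank ` t) ` {t \<in> joined. t \<noteq> s \<and> crosses s t}"
    then obtain t where t: "t \<in> joined" "t' = rank ` t" "t \<noteq> s" "crosses s t" by blast
    have "t' \<noteq> rank ` s" using inj_onD[OF inj _ t(1) assms] t by auto
    then show "t' \<in> {t' \<in> (\<lambda>s. rank ` s) ` joined. t' \<noteq> rank ` s \<and> crosses (rank ` s) t'}"
      using crosses_rank[OF assms t(1)] t by auto
  qed
  moreover have "inj_on (\<lambda>t. rank ` t) {t \<in> joined. t \<noteq> s \<and> crosses s t}"
    using inj inj_on_subset by fastforce
  ultimately show ?thesis unfolding cross_count_def by (simp add: card_image)
qed

subsection \<open>Parity of crossing numbers under capping\<close>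

lemma same_side:
  assumes "{c, d} \<in> p" "i \<notin> {c, d}" "succ_i \<notin> {c, d}"
  shows "btw c d i = btw c d succ_i"
  using btw_adjacent[OF i_range, of c d] pairing_sub[OF pairing assms(1)] assms(2,3)
  by (auto simp: succ_i_def)

lemma cross_count_old_parity:
  assumes "s \<in> joined" "s \<noteq> {mate_i, mate_j}"
  shows "even (cross_count joined s) = even (cross_count p s)"
proof -
  note old = old_string[OF assms]
  obtain c d where s: "s = {c, d}" using pairing_string[OF pairing old(1)] by blast
  let ?X = "btw c d"
  have side: "?X i = ?X succ_i" using same_side old s by auto
  show ?thesis
  proof (cases "mate_i = succ_i")
    case True
    have "\<not> crosses s {i, succ_i}" using side s by (simp add: crosses_iff)
    then have "{t \<in> joined. t \<noteq> s \<and> crosses s t} = {t \<in> p. t \<noteq> s \<and> crosses s t}"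
      unfolding joined_closed_loop[OF True] by auto
    then show ?thesis by (simp add: cross_count_def)
  next
    case False
    define B where "B = {t \<in> p. t \<noteq> s \<and> crosses s t} - {{i, mate_i}, {succ_i, mate_j}}"
    have fB: "finite B" using finite_p by (simp add: B_def)
    have ne: "{i, mate_i} \<noteq> {succ_i, mate_j}"
      using distinct_ends[OF False] by (auto simp: doubleton_eq_iff)
    have split_new: "{t \<in> joined. t \<noteq> s \<and> crosses s t} = B \<union> {t \<in> {{mate_i, mate_j}}. crosses s t}"
      using False assms(2) by (auto simp: joined_def B_def)
    have new: "cross_count joined s = card B + (if crosses s {mate_i, mate_j} then 1 else 0)"
      unfolding cross_count_def split_new using fB new_string_not_old[OF False]
      by (subst card_Un_disjoint) (auto simp: B_def card_singleton_filter)
    have split_orig: "{t \<in> p. t \<noteq> s \<and> crosses s t} = B \<union> {t \<in> {{i, mate_i}, {succ_i, mate_j}}. crosses s t}"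
      using string_i(1) string_j(1) old s by (auto simp: B_def)
    have orig: "cross_count p s = card B + ((if crosses s {i, mate_i} then 1 else 0)
                                            + (if crosses s {succ_i, mate_j} then 1 else 0))"
      unfolding cross_count_def split_orig using fB
      by (subst card_Un_disjoint) (auto simp: B_def card_doubleton_filter[OF ne])
    have "crosses s {i, mate_i} = (?X i \<noteq> ?X mate_i)"
      "crosses s {succ_i, mate_j} = (?X succ_i \<noteq> ?X mate_j)"
      "crosses s {mate_i, mate_j} = (?X mate_i \<noteq> ?X mate_j)" using s by (simp_all add: crosses_iff)
    then show ?thesis unfolding new orig side
      by (cases "?X succ_i"; cases "?X mate_i"; cases "?X mate_j") auto
  qed
qed

lemma crosses_concatenated:
  assumes "mate_i \<noteq> succ_i" "t \<in> p - {{i, mate_i}, {succ_i, mate_j}}"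
  shows "crosses {mate_i, mate_j} t = (crosses {i, mate_i} t \<noteq> crosses {succ_i, mate_j} t)"
proof -
  have "t \<in> joined" "t \<noteq> {mate_i, mate_j}"
    using assms new_string_not_old[OF assms(1)] by (auto simp: joined_def)
  note old = old_string[OF this]
  obtain c e where t: "t = {c, e}" "c \<noteq> e" using pairing_string[OF pairing old(1)] by blast
  have side: "btw c e i = btw c e succ_i" using same_side old t by auto
  have "distinct [mate_i, mate_j, c, e]" "distinct [i, mate_i, c, e]" "distinct [succ_i, mate_j, c, e]"
    using old t distinct_ends[OF assms(1)] by auto
  then show ?thesis unfolding t crosses_iff
    using crosses_sym_distinct[of mate_i mate_j c e] crosses_sym_distinct[of i mate_i c e]
      crosses_sym_distinct[of succ_i mate_j c e] side
    by auto
qed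

lemma cross_count_new_parity:
  assumes "mate_i \<noteq> succ_i"
  shows "even (cross_count joined {mate_i, mate_j})
       = (even (cross_count p {i, mate_i}) = even (cross_count p {succ_i, mate_j}))"
proof -
  note d = distinct_ends[OF assms]
  define R where "R = p - {{i, mate_i}, {succ_i, mate_j}}"
  let ?A = "crosses {i, mate_i}" and ?B = "crosses {succ_i, mate_j}"
  have fR: "finite R" using finite_p by (simp add: R_def)
  have ne: "{i, mate_i} \<noteq> {succ_i, mate_j}" using d by (auto simp: doubleton_eq_iff)
  have "{t \<in> joined. t \<noteq> {mate_i, mate_j} \<and> crosses {mate_i, mate_j} t}
      = {t \<in> R. crosses {mate_i, mate_j} t}"
    using assms new_string_not_old[OF assms] by (auto simp: joined_def R_def)
  also have "\<dots> = {t \<in> R. ?A t \<noteq> ?B t}"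
    using crosses_concatenated[OF assms] by (auto simp: R_def)
  finally have new: "cross_count joined {mate_i, mate_j} = card {t \<in> R. ?A t \<noteq> ?B t}"
    by (simp add: cross_count_def)
  have split_A: "{t \<in> p. t \<noteq> {i, mate_i} \<and> ?A t} = {t \<in> R. ?A t} \<union> {t \<in> {{succ_i, mate_j}}. ?A t}"
    using string_j(1) ne by (auto simp: R_def)
  have count_A: "cross_count p {i, mate_i} = card {t \<in> R. ?A t} + (if ?A {succ_i, mate_j} then 1 else 0)"
    unfolding cross_count_def split_A using fR
    by (subst card_Un_disjoint) (auto simp: R_def card_singleton_filter)
  have split_B: "{t \<in> p. t \<noteq> {succ_i, mate_j} \<and> ?B t} = {t \<in> R. ?B t} \<union> {t \<in> {{i, mate_i}}. ?B t}"
    using string_i(1) ne by (auto simp: R_def)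
  have count_B: "cross_count p {succ_i, mate_j} = card {t \<in> R. ?B t} + (if ?B {i, mate_i} then 1 else 0)"
    unfolding cross_count_def split_B using fR
    by (subst card_Un_disjoint) (auto simp: R_def card_singleton_filter)
  have sym: "?B {i, mate_i} = ?A {succ_i, mate_j}"
    using crosses_sym_distinct[of i mate_i succ_i mate_j] d by (auto simp: crosses_iff)
  have "even (card {t \<in> R. ?A t \<noteq> ?B t}) = even (card {t \<in> R. ?A t} + card {t \<in> R. ?B t})"
    using arg_cong[OF card_xor[OF fR, of ?A ?B], of even] by simp
  then show ?thesis unfolding new count_A count_B sym by auto
qed

lemma capping_in_E:
  assumes "\<forall>s\<in>p. even (cross_count p s)"
  shows "capping n p i \<in> En (n - 2)"
  unfolding En_iff
proof (intro CollectI conjI ballI)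
  show "pairing_on {1..n-2} (capping n p i)" by (rule capping_pairing)
  fix s' assume "s' \<in> capping n p i"
  then obtain s where s: "s \<in> joined" "s' = rank ` s" unfolding capping_eq by blast
  have "even (cross_count joined s)"
  proof (cases "s = {mate_i, mate_j}")
    case True
    then show ?thesis using cross_count_new_parity[OF new_string[OF s(1) True]]
        assms string_i(1) string_j(1) by simp
  next
    case False
    then show ?thesis using cross_count_old_parity[OF s(1) False] assms old_string[OF s(1) False]
      by simp
  qed
  then show "even (cross_count (capping n p i) s')" using cross_count_rank[OF s(1)] s(2) by simp
qed

lemma capping_keeps_crossing:
  assumes "s \<in> p" "u \<in> p" "crosses s u" "i \<notin> s \<union> u" "csucc n i \<notin> s \<union> u"
  shows "capping n p i \<notin> Nn (n - 2)"
proof -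
  have s: "s \<in> joined" "rank ` s \<in> capping n p i" and u: "u \<in> joined" "rank ` u \<in> capping n p i"
    using surviving_string assms by auto
  have "crosses (rank ` s) (rank ` u)" using crosses_rank[OF s(1) u(1)] assms(3) by simp
  then show ?thesis using s(2) u(2) unfolding Nn_iff by blast
qed

lemma capping_keeps_odd_string:
  assumes "s \<in> p" "odd (cross_count p s)" "i \<notin> s" "csucc n i \<notin> s"
  shows "capping n p i \<notin> En (n - 2)"
proof -
  note surv = surviving_string[OF assms(1,3,4)]
  have "odd (cross_count (capping n p i) (rank ` s))"
    using cross_count_rank[OF surv(1)] cross_count_old_parity[OF surv(1,2)] assms(2) by simp
  then show ?thesis using surv(3) unfolding En_iff by auto
qed

end

section \<open>Free adjacent pairs of points\<close>

lemma csucc_inj_on: "inj_on (csucc n) {1..n}"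
proof (rule inj_onI)
  fix i i' assume "i \<in> {1..n}" "i' \<in> {1..n}" "csucc n i = csucc n i'"
  then show "i = i'" by (cases "i = n"; cases "i' = n") (auto simp: csucc_def)
qed

text \<open>If every cyclically adjacent pair meets S, then S contains at least half the points:
  csucc maps the points outside S injectively into S.\<close>
lemma blocked_bound:
  assumes "S \<subseteq> {1..n}" and blocked: "\<forall>i\<in>{1..n}. i \<in> S \<or> csucc n i \<in> S"
  shows "n \<le> 2 * card S"
proof -
  have "csucc n ` ({1..n} - S) \<subseteq> S" using blocked by blast
  then have "card ({1..n} - S) \<le> card S"
    using finite_subset[OF assms(1)] inj_on_subset[OF csucc_inj_on]
    by (intro card_inj_on_le[of "csucc n"]) auto
  moreover have "card ({1..n} - S) = n - card S"
    using assms(1) by (simp add: card_Diff_subset finite_subset)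
  ultimately show ?thesis by simp
qed

lemma free_adjacent_pair:
  assumes "S \<subseteq> {1..n}" "2 * card S < n"
  shows "\<exists>i\<in>{1..n}. i \<notin> S \<and> csucc n i \<notin> S"
proof (rule ccontr)
  assume "\<not> ?thesis"
  then have "n \<le> 2 * card S" using blocked_bound[OF assms(1)] by blast
  then show False using assms(2) by simp
qed

lemma blocking_four_points:
  assumes "n \<ge> 8" "S \<subseteq> {1..n}" "card S = 4"
    and blocked: "\<forall>i\<in>{1..n}. i \<in> S \<or> csucc n i \<in> S"
  shows "S = {1, 3, 5, 7} \<or> S = {2, 4, 6, 8}"
proof -
  have n8: "n = 8" using blocked_bound[OF assms(2) blocked] assms by simp
  have cs: "csucc n 1 = 2" "csucc n 2 = 3" "csucc n 3 = 4" "csucc n 4 = 5" "csucc n 5 = 6"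
    "csucc n 6 = 7" "csucc n 7 = 8" "csucc n 8 = 1" using n8 by (auto simp: csucc_def)
  have m: "i \<in> S \<or> csucc n i \<in> S" if "i \<in> {1..8}" for i using blocked that n8 by blast
  obtain r1 r2 r3 r4 where r: "r1 \<in> S" "r1 = 1 \<or> r1 = 2" "r2 \<in> S" "r2 = 3 \<or> r2 = 4"
      "r3 \<in> S" "r3 = 5 \<or> r3 = 6" "r4 \<in> S" "r4 = 7 \<or> r4 = 8"
    using m[of 1] m[of 3] m[of 5] m[of 7] cs by auto
  have sub: "{r1, r2, r3, r4} \<subseteq> S" using r by auto
  have "card {r1, r2, r3, r4} = 4" using r(2,4,6,8) by (elim disjE) simp_all
  then have S: "S = {r1, r2, r3, r4}"
    using sub assms(3) card_subset_eq[OF finite_subset[OF assms(2)] sub] by simp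
  have "2 \<in> S \<or> 3 \<in> S" "4 \<in> S \<or> 5 \<in> S" "6 \<in> S \<or> 7 \<in> S" "8 \<in> S \<or> 1 \<in> S"
    using m[of 2] m[of 4] m[of 6] m[of 8] cs by auto
  then show ?thesis using r(2,4,6,8) unfolding S by (elim disjE) simp_all
qed

lemma alternating_sets_eq:
  assumes "x \<in> A" "x \<in> B" "A = {1, 3, 5, 7::nat} \<or> A = {2, 4, 6, 8}" "B = {1, 3, 5, 7} \<or> B = {2, 4, 6, 8}"
  shows "A = B"
  using assms(3,4)
proof (elim disjE)
  assume "A = {1, 3, 5, 7}" "B = {2, 4, 6, 8}"
  then show "A = B" using assms(1,2) by simp linarith
next
  assume "A = {2, 4, 6, 8}" "B = {1, 3, 5, 7}"
  then show "A = B" using assms(1,2) by simp linarith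
qed simp_all

lemma capping_not_E:
  assumes p: "pairing_on {1..n} p" and "n \<ge> 5" "s \<in> p" "odd (cross_count p s)"
  shows "\<exists>i\<in>{1..n}. capping n p i \<notin> En (n - 2)"
proof -
  have "s \<subseteq> {1..n}" "card s = 2" using pairing_sub[OF p] pairing_card[OF p] assms(3) by auto
  then obtain i where i: "i \<in> {1..n}" "i \<notin> s" "csucc n i \<notin> s"
    using free_adjacent_pair[of s n] assms(2) by auto
  interpret capping_setup n p i using p assms(2) i(1) by unfold_locales auto
  show ?thesis using capping_keeps_odd_string[OF assms(3,4) i(2,3)] i(1) by blast
qed

lemma second_crossing:
  assumes "\<forall>s\<in>p. even (cross_count p s)" "s \<in> p" "t \<in> p" "crosses s t"
  shows "\<exists>w\<in>p. w \<noteq> s \<and> w \<noteq> t \<and> crosses s w"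
proof (rule ccontr)
  assume "\<not> ?thesis"
  moreover have "t \<noteq> s" using assms(4) crosses_def not_crosses_self by metis
  ultimately have "{u \<in> p. u \<noteq> s \<and> crosses s u} = {t}" using assms(3,4) by auto
  then have "cross_count p s = 1" by (simp add: cross_count_def)
  then show False using assms(1,2) by fastforce
qed

text \<open>Part (2): an E-pairing with a crossing has a capping in E with a crossing.  Of two
  strings t, w crossing s, at least one leaves a free adjacent pair outside its union with s.\<close>
lemma capping_E_not_N:
  assumes p: "pairing_on {1..n} p" and n: "n \<ge> 8" and even: "\<forall>s\<in>p. even (cross_count p s)"
    and st: "s \<in> p" "t \<in> p" "crosses s t"
  shows "\<exists>i\<in>{1..n}. capping n p i \<in> En (n - 2) - Nn (n - 2)"
proof -
  obtain w where w: "w \<in> p" "w \<noteq> s" "w \<noteq> t" "crosses s w" using second_crossing[OF even st] by blast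
  have ts: "t \<noteq> s" using st(3) crosses_def not_crosses_self by metis
  have four: "card (s \<union> u) = 4" "s \<union> u \<subseteq> {1..n}" "u = (s \<union> u) - s" if "u \<in> p" "u \<noteq> s" for u
  proof -
    have "s \<inter> u = {}" using pairing_disjoint[OF p st(1) that(1)] that(2) by auto
    moreover have "card s = 2" "card u = 2" using pairing_card[OF p] st(1) that(1) by auto
    ultimately show "card (s \<union> u) = 4" "u = (s \<union> u) - s"
      by (auto simp: card_Un_disjoint card_ge_0_finite)
    show "s \<union> u \<subseteq> {1..n}" using pairing_sub[OF p] st(1) that(1) by blast
  qed
  have "\<exists>u\<in>{t, w}. \<exists>i\<in>{1..n}. i \<notin> s \<union> u \<and> csucc n i \<notin> s \<union> u"
  proof (rule ccontr)
    assume "\<not> ?thesis"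
    then have alt: "s \<union> t = {1,3,5,7} \<or> s \<union> t = {2,4,6,8}" "s \<union> w = {1,3,5,7} \<or> s \<union> w = {2,4,6,8}"
      using blocking_four_points[OF n four(2,1)[OF st(2) ts]]
        blocking_four_points[OF n four(2,1)[OF w(1,2)]] by blast+
    obtain x where "x \<in> s" using pairing_string[OF p st(1)] by blast
    then have "s \<union> t = s \<union> w" using alternating_sets_eq[OF _ _ alt] by blast
    then show False using four(3)[OF st(2) ts] four(3)[OF w(1,2)] w(3) by simp
  qed
  then obtain u i where u: "u \<in> p" "crosses s u"
      and i: "i \<in> {1..n}" "i \<notin> s \<union> u" "csucc n i \<notin> s \<union> u"
    using st w by blast
  interpret capping_setup n p i using p n i(1) by unfold_locales auto
  show ?thesis using capping_in_E[OF even] capping_keeps_crossing[OF st(1) u i(2,3)] i(1) by blast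
qed

theorem lemma4p4:
  fixes k l :: nat and p :: "nat set set"
  assumes "p \<in> P k l - N k l" and "k + l \<ge> 8"
  shows "(p \<notin> E k l \<longrightarrow> (\<exists>i\<in>{1..k+l}. capping (k + l) p i \<notin> En (k + l - 2)))
       \<and> (p \<in> E k l - N k l \<longrightarrow>
            (\<exists>i\<in>{1..k+l}. capping (k + l) p i \<in> En (k + l - 2) - Nn (k + l - 2)))"
proof -
  have p: "pairing_on {1..k+l} p" using assms(1) by (simp add: P_def Pn_def is_pairing_iff)
  show ?thesis
  proof (intro conjI impI)
    assume "p \<notin> E k l"
    then obtain s where "s \<in> p" "odd (cross_count p s)" using p unfolding E_def En_iff by auto
    then show "\<exists>i\<in>{1..k+l}. capping (k + l) p i \<notin> En (k + l - 2)"
      using capping_not_E[OF p] assms(2) by simp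
  next
    assume "p \<in> E k l - N k l"
    then have "\<forall>s\<in>p. even (cross_count p s)" "\<exists>s\<in>p. \<exists>t\<in>p. crosses s t"
      using p unfolding E_def N_def En_iff Nn_iff by auto
    then show "\<exists>i\<in>{1..k+l}. capping (k + l) p i \<in> En (k + l - 2) - Nn (k + l - 2)"
      using capping_E_not_N[OF p assms(2)] by blast
  qed
qed

end
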